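(* Let $a_1,a_2>0$, $e_1,e_2\in[0,1)$ and $E_1,E_2\in\mathbb{R}$. Put $x_i=a_i(\cos E_i-e_i)$, $y_i=a_i\sqrt{1-e_i^2}\,\sin E_i$ for $i=1,2$, and let $R_{AB}^2=(x_1-x_2)^2+(y_1-y_2)^2$ be the squared Euclidean distance. Suppose the "condition for intersatellite communications" holds: $$4a_1a_2\sqrt{(1-e_1^2)(1-e_2^2)}\,\sin E_1\sin E_2=a_1^2+a_2^2+(a_2e_2-a_1e_1)^2-\tfrac12\left(e_1^2a_1^2+e_2^2a_2^2\right).$$ Define the squared geodesic distance $$\widetilde R_{AB}^2=\tfrac12(a_1^2+a_2^2)+\tfrac12(a_2e_2-a_1e_1)^2+\tfrac14(a_1^2e_1^2+a_2^2e_2^2)-\left(2e_1a_1^2\cos E_1+2e_2a_2^2\cos E_2\right)-\left(e_1^2a_1^2\sin^2E_1+e_2^2a_2^2\sin^2E_2\right)-2a_1a_2\cos E_1\cos E_2+2a_1a_2\left(e_2\cos E_1+e_1\cos E_2\right).$$ Then $\widetilde R_{AB}^2\ge R_{AB}^2$.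
   Context: The points $(x_i,y_i)$ are positions of two satellites on coplanar Kepler ellipses with semi-major axes $a_i$, eccentricities $e_i$ and eccentric anomaly angles $E_i$, parametrized as stated. The quantity $\widetilde R_{AB}^2$ is what the paper calls the (square of the) geodesic distance; it is given explicitly by the displayed formula. *)

theory Defs
  imports Complex_Main
begin

definition kepler_x :: "real \<Rightarrow> real \<Rightarrow> real \<Rightarrow> real" where
  "kepler_x a e E = a * (cos E - e)"

definition kepler_y :: "real \<Rightarrow> real \<Rightarrow> real \<Rightarrow> real" where
  "kepler_y a e E = a * sqrt (1 - e^2) * sin E"

definition euclid_dist_sq ::
  "real \<Rightarrow> real \<Rightarrow> real \<Rightarrow> real \<Rightarrow> real \<Rightarrow> real \<Rightarrow> real" where
  "euclid_dist_sq a1 e1 E1 a2 e2 E2 =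
     (kepler_x a1 e1 E1 - kepler_x a2 e2 E2)^2 + (kepler_y a1 e1 E1 - kepler_y a2 e2 E2)^2"

definition intersat_condition ::
  "real \<Rightarrow> real \<Rightarrow> real \<Rightarrow> real \<Rightarrow> real \<Rightarrow> real \<Rightarrow> bool" where
  "intersat_condition a1 e1 E1 a2 e2 E2 \<longleftrightarrow>
     4 * a1 * a2 * sqrt ((1 - e1^2) * (1 - e2^2)) * sin E1 * sin E2 =
     a1^2 + a2^2 + (a2 * e2 - a1 * e1)^2 - (1/2) * (e1^2 * a1^2 + e2^2 * a2^2)"

definition geodesic_dist_sq ::
  "real \<Rightarrow> real \<Rightarrow> real \<Rightarrow> real \<Rightarrow> real \<Rightarrow> real \<Rightarrow> real" where
  "geodesic_dist_sq a1 e1 E1 a2 e2 E2 =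
     (1/2) * (a1^2 + a2^2) + (1/2) * (a2 * e2 - a1 * e1)^2
     + (1/4) * (a1^2 * e1^2 + a2^2 * e2^2)
     - (2 * e1 * a1^2 * cos E1 + 2 * e2 * a2^2 * cos E2)
     - (e1^2 * a1^2 * (sin E1)^2 + e2^2 * a2^2 * (sin E2)^2)
     - 2 * a1 * a2 * cos E1 * cos E2
     + 2 * a1 * a2 * (e2 * cos E1 + e1 * cos E2)"

end

theory Submission
  imports Defs
begin

text \<open>Expanding the Euclidean distance, the only term involving the product
  \<open>sin E1 * sin E2\<close> is the cross term of the \<open>y\<close>-coordinates; the intersatellite
  condition prescribes exactly its value. Eliminating it and \<open>sin\<^sup>2\<close> via
  \<open>sin\<^sup>2 = 1 - cos\<^sup>2\<close>, the Euclidean distance becomes the geodesic one, so the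
  inequality even holds with equality.\<close>

lemma euclid_dist_sq_expand:
  fixes a1 a2 e1 e2 E1 E2 :: real
  assumes "\<bar>e1\<bar> \<le> 1" and "\<bar>e2\<bar> \<le> 1"
  shows "euclid_dist_sq a1 e1 E1 a2 e2 E2 =
      (a1 * (cos E1 - e1) - a2 * (cos E2 - e2))^2
      + a1^2 * (1 - e1^2) * (sin E1)^2 + a2^2 * (1 - e2^2) * (sin E2)^2
      - 2 * a1 * a2 * sqrt ((1 - e1^2) * (1 - e2^2)) * sin E1 * sin E2"
proof -
  have "(sqrt (1 - e1^2))^2 = 1 - e1^2" "(sqrt (1 - e2^2))^2 = 1 - e2^2"
    using assms by (simp_all add: abs_square_le_1)
  then show ?thesis
    unfolding euclid_dist_sq_def kepler_x_def kepler_y_def real_sqrt_mult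
    by (simp add: power2_eq_square algebra_simps)
qed

lemma geodesic_dist_sq_eq_euclid_dist_sq:
  fixes a1 a2 e1 e2 E1 E2 :: real
  assumes "\<bar>e1\<bar> \<le> 1" and "\<bar>e2\<bar> \<le> 1"
    and "intersat_condition a1 e1 E1 a2 e2 E2"
  shows "geodesic_dist_sq a1 e1 E1 a2 e2 E2 = euclid_dist_sq a1 e1 E1 a2 e2 E2"
proof -
  have "(sin E1)^2 = 1 - (cos E1)^2" "(sin E2)^2 = 1 - (cos E2)^2"
    by (simp_all add: sin_squared_eq)
  with assms(3) show ?thesis
    unfolding euclid_dist_sq_expand[OF assms(1,2)] geodesic_dist_sq_def intersat_condition_def
    by algebra
qed

theorem mainTheorem1:
  fixes a1 a2 e1 e2 E1 E2 :: real
  assumes "a1 > 0" and "a2 > 0"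
    and "0 \<le> e1" and "e1 < 1" and "0 \<le> e2" and "e2 < 1"
    and "intersat_condition a1 e1 E1 a2 e2 E2"
  shows "geodesic_dist_sq a1 e1 E1 a2 e2 E2 \<ge> euclid_dist_sq a1 e1 E1 a2 e2 E2"
proof -
  have "\<bar>e1\<bar> \<le> 1" "\<bar>e2\<bar> \<le> 1"
    using assms(3-6) by simp_all
  with assms(7) show ?thesis
    using geodesic_dist_sq_eq_euclid_dist_sq by simp
qed

end
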